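(* For every positive integer $n$, the number of circular permutations of $[n]=\{1,2,\ldots,n\}$ that avoid the pattern $1342$ equals $2^{n-1}-(n-1)$.
   Context: A circular permutation of $[n]$ is an arrangement of $1,2,\ldots,n$ clockwise around a circle, two arrangements being identified if they differ by a rotation. Equivalently, it can be represented uniquely as a linear permutation $\pi_1\pi_2\cdots\pi_n$ of $[n]$ with $\pi_n=n$, whose rotations all represent the same circular permutation. The reduced form of a sequence of distinct positive integers is obtained by replacing its smallest entry by $1$, its next smallest by $2$, and so on; a pattern is such a reduced form. An occurrence of a pattern $\tau$ of length $m$ in a circular permutation $\pi$ is a sequence of $m$ letters of $\pi$ read in clockwise order and lying within one revolution (i.e., a subsequence of some rotation of the linear representation) whose reduced form is $\tau$; $\pi$ avoids $\tau$ if it has no occurrence of $\tau$. *)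

theory Defs
  imports Main "HOL-Library.Sublist" "HOL-Combinatorics.Multiset_Permutations"
begin

(* Circular permutations of [n], represented uniquely by linear permutations
   (lists) of {1..n} whose last entry is n. *)
definition circ_perms :: "nat \<Rightarrow> nat list set" where
  "circ_perms n = {p \<in> permutations_of_set {1..n}. last p = n}"

definition reduced_form :: "nat list \<Rightarrow> nat list" where
  "reduced_form xs = map (\<lambda>x. card {y \<in> set xs. y \<le> x}) xs"

definition circ_contains :: "nat list \<Rightarrow> nat list \<Rightarrow> bool" where
  "circ_contains p tau = (\<exists>k ys. subseq ys (rotate k p) \<and> reduced_form ys = tau)"

definition circ_avoids :: "nat list \<Rightarrow> nat list \<Rightarrow> bool" where
  "circ_avoids p tau = (\<not> circ_contains p tau)"

end

theory Submission
  imports Defs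
begin

(* Rotate a circular permutation so that n comes last: p = s @ [n]. An occurrence of 1342 in p
   is an occurrence in p of one of the linear patterns 1342, 3421, 4213, 2134. Both 4213 and
   2134 contain 213, and an occurrence through n can only be a 2134 ending in n, so p avoids
   1342 iff s avoids 213, 1342 and 3421.

   Split s = a @ 1 # b at its minimum. Then s avoids these three patterns iff every entry of a
   exceeds every entry of b, both a and b avoid 213 and 231, and a is decreasing or b is
   increasing. A permutation avoiding 213 and 231 starts with its minimum or its maximum, so
   there are 2^(k-1) of them on k letters. Inclusion-exclusion over the two monotone cases and
   summation over k = |b| < m = n - 1 give
     sum_{k<m} (2^(k-1) + 2^(m-k-2) - 1) = 2^m - m. *)

definition contains_213 :: "nat list \<Rightarrow> bool" where
  "contains_213 s \<longleftrightarrow> (\<exists>x1 x2 x3. x1 < x2 \<and> x2 < x3 \<and> subseq [x2, x1, x3] s)"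

definition contains_231 :: "nat list \<Rightarrow> bool" where
  "contains_231 s \<longleftrightarrow> (\<exists>x1 x2 x3. x1 < x2 \<and> x2 < x3 \<and> subseq [x2, x3, x1] s)"

definition contains_1342 :: "nat list \<Rightarrow> bool" where
  "contains_1342 s \<longleftrightarrow>
     (\<exists>x1 x2 x3 x4. x1 < x2 \<and> x2 < x3 \<and> x3 < x4 \<and> subseq [x1, x3, x4, x2] s)"

definition contains_3421 :: "nat list \<Rightarrow> bool" where
  "contains_3421 s \<longleftrightarrow>
     (\<exists>x1 x2 x3 x4. x1 < x2 \<and> x2 < x3 \<and> x3 < x4 \<and> subseq [x3, x4, x2, x1] s)"

definition avoids_213_231 :: "nat list \<Rightarrow> bool" where
  "avoids_213_231 s \<longleftrightarrow> \<not> contains_213 s \<and> \<not> contains_231 s"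

definition avoids_213_1342_3421 :: "nat list \<Rightarrow> bool" where
  "avoids_213_1342_3421 s \<longleftrightarrow> \<not> contains_213 s \<and> \<not> contains_1342 s \<and> \<not> contains_3421 s"

lemma set_subseq: "subseq xs ys \<Longrightarrow> set xs \<subseteq> set ys"
  by (induction rule: list_emb.induct) auto

lemma distinct_subseq: "subseq xs ys \<Longrightarrow> distinct ys \<Longrightarrow> distinct xs"
  by (induction rule: list_emb.induct) (auto dest: set_subseq)

lemma subseq_appendD1: "subseq (xs @ ys) zs \<Longrightarrow> subseq xs zs"
  by (metis list_emb_appendD subseq_rev_drop_many)

lemma subseq_Cons_Cons_cases:
  "subseq (x # xs) (y # ys) \<Longrightarrow> (x = y \<and> subseq xs ys) \<or> subseq (x # xs) ys"
  by (auto split: if_splits)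

lemma subseq_snoc_iff:
  "subseq xs (ys @ [y]) \<longleftrightarrow> subseq xs ys \<or> (\<exists>xs'. xs = xs' @ [y] \<and> subseq xs' ys)"
proof
  assume "subseq xs (ys @ [y])"
  then obtain xs1 xs2 where "xs = xs1 @ xs2" "subseq xs1 ys" "subseq xs2 [y]"
    by (rule subseq_appendE)
  moreover have "xs2 = [] \<or> xs2 = [y]"
    using \<open>subseq xs2 [y]\<close> by (cases xs2) (auto split: if_splits)
  ultimately show "subseq xs ys \<or> (\<exists>xs'. xs = xs' @ [y] \<and> subseq xs' ys)"
    by auto
qed (auto intro: list_emb_append_mono subseq_rev_drop_many)

lemma subseq_pair_cases:
  assumes "u \<in> set l" "v \<in> set l" "u \<noteq> v"
  shows "subseq [u, v] l \<or> subseq [v, u] l"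
proof -
  obtain p q where l: "l = p @ u # q"
    using assms(1) split_list by metis
  with assms(2,3) consider "v \<in> set p" | "v \<in> set q"
    by auto
  then show ?thesis
  proof cases
    case 1
    then have "subseq ([v] @ [u]) (p @ u # q)"
      by (intro list_emb_append_mono) (auto simp: subseq_singleton_left)
    then show ?thesis
      using l by simp
  next
    case 2
    then have "subseq [u, v] (u # q)"
      by (simp add: subseq_singleton_left)
    then show ?thesis
      using l by (simp add: subseq_drop_many)
  qed
qed

lemma sorted_wrt_subseq: "subseq xs ys \<Longrightarrow> sorted_wrt R ys \<Longrightarrow> sorted_wrt R xs"
  by (induction rule: list_emb.induct) (auto dest: set_subseq)

lemma sorted_wrt_iff_subseq_pairs: "sorted_wrt R l \<longleftrightarrow> (\<forall>u v. subseq [u, v] l \<longrightarrow> R u v)"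
proof
  show "sorted_wrt R l \<Longrightarrow> \<forall>u v. subseq [u, v] l \<longrightarrow> R u v"
    using sorted_wrt_subseq by fastforce
next
  show "\<forall>u v. subseq [u, v] l \<longrightarrow> R u v \<Longrightarrow> sorted_wrt R l"
  proof (induction l)
    case (Cons y l)
    have "R y z" if "z \<in> set l" for z
      using Cons.prems that by (auto simp: subseq_singleton_left)
    moreover have "sorted_wrt R l"
      using Cons by (blast intro: list_emb_Cons)
    ultimately show ?case
      by simp
  qed simp
qed

lemma subseq_append_separatedE:
  fixes a r :: "'a :: order list"
  assumes "subseq ys (a @ r)" and "\<forall>u\<in>set a. \<forall>v\<in>set r. v < u"
  obtains ys1 ys2 where "ys = ys1 @ ys2" "subseq ys1 a" "subseq ys2 r"
    and "\<forall>u\<in>set ys1. \<forall>v\<in>set ys2. v < u"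
proof -
  from assms(1) obtain ys1 ys2 where "ys = ys1 @ ys2" "subseq ys1 a" "subseq ys2 r"
    by (rule subseq_appendE)
  with assms(2) show thesis
    using that set_subseq by blast
qed

lemma subseq_Cons_skip_min:
  fixes x :: "'a :: order"
  assumes "subseq (y # ys) (x # b)" and "\<forall>v\<in>set b. x < v" and "z \<in> set ys" "z < y"
  shows "subseq (y # ys) b"
  using subseq_Cons_Cons_cases[OF assms(1)] assms(2-4) set_subseq by fastforce

lemma subseq_snoc_max_dropD:
  fixes n :: "'a :: order"
  assumes "subseq xs (s @ [n])" and "\<forall>y\<in>set s. y < n" and "z \<in> set xs" "last xs < z"
  shows "subseq xs s"
proof (rule ccontr)
  assume "\<not> subseq xs s"
  with assms(1) obtain xs' where "xs = xs' @ [n]" "subseq xs' s"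
    unfolding subseq_snoc_iff by blast
  moreover from this have "z \<in> set xs'"
    using assms(3,4) by auto
  ultimately show False
    using assms(2,4) set_subseq by fastforce
qed

lemma subseq_rotate_iff:
  "(\<exists>k. subseq ys (rotate k p)) \<longleftrightarrow> (\<exists>ys1 ys2. ys = ys1 @ ys2 \<and> subseq (ys2 @ ys1) p)"
proof
  assume "\<exists>k. subseq ys (rotate k p)"
  then obtain j where "subseq ys (drop j p @ take j p)"
    by (auto simp: rotate_drop_take)
  then obtain ys1 ys2 where "ys = ys1 @ ys2" "subseq ys1 (drop j p)" "subseq ys2 (take j p)"
    by (rule subseq_appendE)
  moreover from this have "subseq (ys2 @ ys1) (take j p @ drop j p)"
    by (intro list_emb_append_mono)
  ultimately show "\<exists>ys1 ys2. ys = ys1 @ ys2 \<and> subseq (ys2 @ ys1) p"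
    by auto
next
  assume "\<exists>ys1 ys2. ys = ys1 @ ys2 \<and> subseq (ys2 @ ys1) p"
  then obtain ys1 ys2 us vs where "ys = ys1 @ ys2" "p = us @ vs" "subseq ys2 us" "subseq ys1 vs"
    by (metis list_emb_appendD)
  then have "subseq ys (rotate (length us) p)"
    by (simp add: rotate_append list_emb_append_mono)
  then show "\<exists>k. subseq ys (rotate k p)" ..
qed

lemma subseq_rotate_4_iff:
  "(\<exists>k. subseq [a, b, c, d] (rotate k p)) \<longleftrightarrow>
     subseq [a, b, c, d] p \<or> subseq [d, a, b, c] p \<or> subseq [c, d, a, b] p \<or> subseq [b, c, d, a] p"
  unfolding subseq_rotate_iff
  by (auto simp: Cons_eq_append_conv; metis append.left_neutral append_Cons append_Nil2)

lemma length_reduced_form [simp]: "length (reduced_form xs) = length xs"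
  by (simp add: reduced_form_def)

lemma reduced_form_eq_1342_iff:
  "reduced_form ys = [1, 3, 4, 2] \<longleftrightarrow>
     (\<exists>x1 x2 x3 x4. x1 < x2 \<and> x2 < x3 \<and> x3 < x4 \<and> ys = [x1, x3, x4, x2])"
proof
  let ?rank = "\<lambda>x. card {y \<in> set ys. y \<le> x}"
  assume rf: "reduced_form ys = [1, 3, 4, 2]"
  have "length ys = length (reduced_form ys)"
    by simp
  then have "length ys = 4"
    by (simp only: rf) simp
  then obtain x1 x3 x4 x2 where ys: "ys = [x1, x3, x4, x2]"
    by (auto simp: numeral_eq_Suc length_Suc_conv)
  have rank_less: "?rank u < ?rank v \<Longrightarrow> u < v" for u v
    using card_mono[of "{y \<in> set ys. y \<le> u}" "{y \<in> set ys. y \<le> v}"] by fastforce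
  have "?rank x1 = 1" "?rank x2 = 2" "?rank x3 = 3" "?rank x4 = 4"
    using rf unfolding ys reduced_form_def by simp_all
  then show "\<exists>x1 x2 x3 x4. x1 < x2 \<and> x2 < x3 \<and> x3 < x4 \<and> ys = [x1, x3, x4, x2]"
    using ys rank_less[of x1 x2] rank_less[of x2 x3] rank_less[of x3 x4] by auto
next
  assume "\<exists>x1 x2 x3 x4. x1 < x2 \<and> x2 < x3 \<and> x3 < x4 \<and> ys = [x1, x3, x4, x2]"
  then obtain x1 x2 x3 x4 where less: "x1 < x2" "x2 < x3" "x3 < x4" and ys: "ys = [x1, x3, x4, x2]"
    by blast
  have "{y \<in> set ys. y \<le> x1} = {x1}" "{y \<in> set ys. y \<le> x2} = {x1, x2}"
    "{y \<in> set ys. y \<le> x3} = {x1, x2, x3}" "{y \<in> set ys. y \<le> x4} = {x1, x2, x3, x4}"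
    using less ys by auto
  then show "reduced_form ys = [1, 3, 4, 2]"
    using less ys by (simp add: reduced_form_def)
qed

lemma circ_contains_1342_iff:
  "circ_contains p [1, 3, 4, 2] \<longleftrightarrow>
     (\<exists>x1 x2 x3 x4. x1 < x2 \<and> x2 < x3 \<and> x3 < x4 \<and>
        (subseq [x1, x3, x4, x2] p \<or> subseq [x2, x1, x3, x4] p \<or>
         subseq [x4, x2, x1, x3] p \<or> subseq [x3, x4, x2, x1] p))"
proof -
  have "circ_contains p [1, 3, 4, 2] \<longleftrightarrow>
     (\<exists>x1 x2 x3 x4. x1 < x2 \<and> x2 < x3 \<and> x3 < x4 \<and> (\<exists>k. subseq [x1, x3, x4, x2] (rotate k p)))"
    unfolding circ_contains_def reduced_form_eq_1342_iff by blast
  then show ?thesis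
    unfolding subseq_rotate_4_iff .
qed

lemma circ_contains_1342_snocD:
  assumes "circ_contains (s @ [n]) [1, 3, 4, 2]" and max: "\<forall>y\<in>set s. y < n"
  shows "contains_213 s \<or> contains_1342 s \<or> contains_3421 s"
proof -
  obtain x1 x2 x3 x4 where less: "x1 < x2" "x2 < x3" "x3 < x4"
    and occ: "subseq [x1, x3, x4, x2] (s @ [n]) \<or> subseq [x2, x1, x3, x4] (s @ [n]) \<or>
       subseq [x4, x2, x1, x3] (s @ [n]) \<or> subseq [x3, x4, x2, x1] (s @ [n])"
    using assms(1) unfolding circ_contains_1342_iff by blast
  from occ show ?thesis
  proof (elim disjE)
    assume "subseq [x1, x3, x4, x2] (s @ [n])"
    then have "subseq [x1, x3, x4, x2] s"
      by (rule subseq_snoc_max_dropD[OF _ max, where z = x4]) (use less in auto)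
    then show ?thesis
      unfolding contains_1342_def using less by blast
  next
    assume "subseq [x2, x1, x3, x4] (s @ [n])"
    then have "subseq [x2, x1, x3] s"
      using subseq_snoc_iff[of "[x2, x1, x3] @ [x4]" s n] subseq_appendD1[of "[x2, x1, x3]" "[x4]" s]
      by auto
    then show ?thesis
      unfolding contains_213_def using less by blast
  next
    assume "subseq [x4, x2, x1, x3] (s @ [n])"
    then have "subseq [x4, x2, x1, x3] s"
      by (rule subseq_snoc_max_dropD[OF _ max, where z = x4]) (use less in auto)
    then have "subseq [x2, x1, x3] s"
      by (rule subseq_Cons')
    then show ?thesis
      unfolding contains_213_def using less by blast
  next
    assume "subseq [x3, x4, x2, x1] (s @ [n])"
    then have "subseq [x3, x4, x2, x1] s"
      by (rule subseq_snoc_max_dropD[OF _ max, where z = x3]) (use less in auto)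
    then show ?thesis
      unfolding contains_3421_def using less by blast
  qed
qed

lemma circ_contains_1342_snocI:
  assumes "contains_213 s \<or> contains_1342 s \<or> contains_3421 s" and max: "\<forall>y\<in>set s. y < n"
  shows "circ_contains (s @ [n]) [1, 3, 4, 2]"
  using assms(1)
proof (elim disjE)
  assume "contains_213 s"
  then obtain x1 x2 x3 where less: "x1 < x2" "x2 < x3" and occ: "subseq [x2, x1, x3] s"
    unfolding contains_213_def by blast
  from occ have "x3 < n"
    using max set_subseq by fastforce
  moreover from occ have "subseq [x2, x1, x3, n] (s @ [n])"
    using subseq_append[of "[x2, x1, x3]" "[n]" s] by simp
  ultimately show ?thesis
    unfolding circ_contains_1342_iff using less by blast
next
  assume "contains_1342 s"
  then show ?thesis
    unfolding contains_1342_def circ_contains_1342_iff by (blast intro: subseq_rev_drop_many)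
next
  assume "contains_3421 s"
  then show ?thesis
    unfolding contains_3421_def circ_contains_1342_iff by (blast intro: subseq_rev_drop_many)
qed

lemma circ_avoids_1342_snoc_iff:
  assumes "\<forall>y\<in>set s. y < n"
  shows "circ_avoids (s @ [n]) [1, 3, 4, 2] \<longleftrightarrow> avoids_213_1342_3421 s"
  using circ_contains_1342_snocD[OF _ assms] circ_contains_1342_snocI[OF _ assms]
  unfolding circ_avoids_def avoids_213_1342_3421_def by blast

lemma sorted_avoids_213_231:
  assumes "sorted_wrt (<) s \<or> sorted_wrt (>) s"
  shows "avoids_213_231 s"
  using assms sorted_wrt_subseq
  unfolding avoids_213_231_def contains_213_def contains_231_def by fastforce

lemma avoids_213_231_ConsI:
  assumes t: "avoids_213_231 t" and y: "(\<forall>z\<in>set t. y < z) \<or> (\<forall>z\<in>set t. z < y)"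
  shows "avoids_213_231 (y # t)"
proof -
  have "\<not> contains_213 (y # t)"
  proof
    assume "contains_213 (y # t)"
    then obtain x1 x2 x3 where x: "x1 < x2" "x2 < x3" and "subseq [x2, x1, x3] (y # t)"
      unfolding contains_213_def by blast
    then consider "x2 = y" "x1 \<in> set t" "x3 \<in> set t" | "subseq [x2, x1, x3] t"
      using subseq_Cons_Cons_cases set_subseq by fastforce
    then show False
      using t y x unfolding avoids_213_231_def contains_213_def by cases force+
  qed
  moreover have "\<not> contains_231 (y # t)"
  proof
    assume "contains_231 (y # t)"
    then obtain x1 x2 x3 where x: "x1 < x2" "x2 < x3" and "subseq [x2, x3, x1] (y # t)"
      unfolding contains_231_def by blast
    then consider "x2 = y" "x1 \<in> set t" "x3 \<in> set t" | "subseq [x2, x3, x1] t"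
      using subseq_Cons_Cons_cases set_subseq by fastforce
    then show False
      using t y x unfolding avoids_213_231_def contains_231_def by cases force+
  qed
  ultimately show ?thesis
    unfolding avoids_213_231_def ..
qed

lemma avoids_213_231_Cons_iff:
  assumes "y \<notin> set t"
  shows "avoids_213_231 (y # t) \<longleftrightarrow>
    avoids_213_231 t \<and> ((\<forall>z\<in>set t. y < z) \<or> (\<forall>z\<in>set t. z < y))"
proof (intro iffI conjI)
  assume av: "avoids_213_231 (y # t)"
  then show "avoids_213_231 t"
    unfolding avoids_213_231_def contains_213_def contains_231_def by (meson list_emb_Cons)
  show "(\<forall>z\<in>set t. y < z) \<or> (\<forall>z\<in>set t. z < y)"
  proof (rule ccontr)
    assume "\<not> ?thesis"
    then obtain z1 z2 where z: "z1 \<in> set t" "z2 \<in> set t" "z1 < y" "y < z2"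
      using assms by (auto simp: not_less order.order_iff_strict)
    then have "subseq [y, z1, z2] (y # t) \<or> subseq [y, z2, z1] (y # t)"
      using subseq_pair_cases[of z1 t z2] by auto
    then have "contains_213 (y # t) \<or> contains_231 (y # t)"
      unfolding contains_213_def contains_231_def using z by blast
    with av show False
      unfolding avoids_213_231_def by blast
  qed
qed (use avoids_213_231_ConsI in blast)

definition Av_213_231 :: "nat set \<Rightarrow> nat list set" where
  "Av_213_231 A = {s \<in> permutations_of_set A. avoids_213_231 s}"

lemma finite_Av_213_231 [simp]: "finite (Av_213_231 A)"
  by (simp add: Av_213_231_def)

lemma Av_213_231_empty: "Av_213_231 {} = {[]}"
  by (auto simp: Av_213_231_def avoids_213_231_def contains_213_def contains_231_def)

lemma Cons_in_permutations_of_set_iff: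
  "x # xs \<in> permutations_of_set A \<longleftrightarrow> x \<in> A \<and> xs \<in> permutations_of_set (A - {x})"
  by (auto simp: permutations_of_set_def)

lemma Av_213_231_eq:
  assumes "finite A" "A \<noteq> {}"
  shows "Av_213_231 A =
    (#) (Min A) ` Av_213_231 (A - {Min A}) \<union> (#) (Max A) ` Av_213_231 (A - {Max A})"
proof (intro equalityI subsetI)
  fix s
  assume s: "s \<in> Av_213_231 A"
  with assms(2) have "s \<noteq> []"
    by (auto simp: Av_213_231_def permutations_of_set_def)
  with s obtain y t where s: "s = y # t" and "y \<in> A"
    and t: "t \<in> permutations_of_set (A - {y})" and "avoids_213_231 (y # t)"
    by (cases s) (auto simp: Av_213_231_def Cons_in_permutations_of_set_iff)
  moreover from t have "set t = A - {y}"
    by (simp add: permutations_of_set_def)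
  ultimately have "avoids_213_231 t" and "(\<forall>z\<in>A - {y}. y < z) \<or> (\<forall>z\<in>A - {y}. z < y)"
    using avoids_213_231_Cons_iff[of y t] by auto
  then have "(\<forall>z\<in>A. y \<le> z) \<or> (\<forall>z\<in>A. z \<le> y)"
    by (metis Diff_iff empty_iff insert_iff less_imp_le order_refl)
  then have "y = Min A \<or> y = Max A"
    using assms(1) \<open>y \<in> A\<close> Min_eqI Max_eqI by metis
  then show "s \<in> (#) (Min A) ` Av_213_231 (A - {Min A}) \<union> (#) (Max A) ` Av_213_231 (A - {Max A})"
    using s t \<open>avoids_213_231 t\<close> by (auto simp: Av_213_231_def)
next
  fix s
  assume "s \<in> (#) (Min A) ` Av_213_231 (A - {Min A}) \<union> (#) (Max A) ` Av_213_231 (A - {Max A})"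
  then obtain y t where y: "y = Min A \<or> y = Max A" and s: "s = y # t"
    and t: "t \<in> permutations_of_set (A - {y})" "avoids_213_231 t"
    by (auto simp: Av_213_231_def)
  have "y \<in> A"
    using y Min_in[OF assms] Max_in[OF assms] by auto
  moreover have "set t = A - {y}"
    using t by (simp add: permutations_of_set_def)
  moreover have "(\<forall>z\<in>A - {y}. y < z) \<or> (\<forall>z\<in>A - {y}. z < y)"
    using y assms Min_le Max_ge by (metis Diff_iff insertI1 order.not_eq_order_implies_strict)
  ultimately show "s \<in> Av_213_231 A"
    using s t avoids_213_231_Cons_iff[of y t]
    by (simp add: Av_213_231_def Cons_in_permutations_of_set_iff)
qed

(* For A = {} the truncated exponent 0 - 1 = 0 correctly counts the empty list. *)

lemma card_Av_213_231:
  assumes "finite A"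
  shows "card (Av_213_231 A) = 2 ^ (card A - 1)"
  using assms
proof (induction "card A" arbitrary: A rule: less_induct)
  case less
  show ?case
  proof (cases "card A \<le> 1")
    case True
    then consider "A = {}" | x where "A = {x}"
      using less.prems by (auto simp: le_Suc_eq card_1_singleton_iff)
    then show ?thesis
    proof cases
      case (2 x)
      then show ?thesis
        using Av_213_231_eq[of "{x}"] by (simp add: Av_213_231_empty)
    qed (simp add: Av_213_231_empty)
  next
    case False
    then obtain a b where "a \<in> A" "b \<in> A" "a \<noteq> b"
      using less.prems by (auto simp: card_le_Suc0_iff_eq)
    then have "A \<noteq> {}" "Min A \<noteq> Max A"
      using Min_le[OF less.prems] Max_ge[OF less.prems] by (auto, metis order.antisym)
    have IH: "card (Av_213_231 (A - {x})) = 2 ^ (card A - 2)" if "x \<in> A" for x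
      using less.hyps[of "A - {x}"] less.prems that card_Diff1_less[OF less.prems that]
      by (simp add: card_Diff_singleton)
    have "card (Av_213_231 A) = card (Av_213_231 (A - {Min A})) + card (Av_213_231 (A - {Max A}))"
      unfolding Av_213_231_eq[OF less.prems \<open>A \<noteq> {}\<close>]
      using \<open>Min A \<noteq> Max A\<close> by (subst card_Un_disjoint) (auto simp: card_image)
    also have "\<dots> = 2 ^ Suc (card A - 2)"
      using IH Min_in Max_in less.prems \<open>A \<noteq> {}\<close> by simp
    also have "Suc (card A - 2) = card A - 1"
      using False by simp
    finally show ?thesis .
  qed
qed

(* An occurrence in a @ x # b splits into a part in a lying above a part in x # b, and the
   minimum x can only be the first letter of the latter. *)

context
  fixes a b :: "nat list" and x :: nat
  assumes above: "\<forall>u\<in>set a. \<forall>v\<in>set (x # b). v < u" and min_b: "\<forall>v\<in>set b. x < v"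
begin

private lemma into_tail: "subseq (y # ys) (x # b) \<Longrightarrow> z \<in> set ys \<Longrightarrow> z < y \<Longrightarrow> subseq (y # ys) b"
  using subseq_Cons_skip_min min_b by blast

lemma contains_213_append_minD:
  assumes "contains_213 (a @ x # b)"
  shows "contains_213 a \<or> contains_213 b"
proof -
  obtain x1 x2 x3 where less: "x1 < x2" "x2 < x3" and "subseq [x2, x1, x3] (a @ x # b)"
    using assms unfolding contains_213_def by blast
  then obtain ys1 ys2 where "[x2, x1, x3] = ys1 @ ys2" "subseq ys1 a" "subseq ys2 (x # b)"
    and "\<forall>u\<in>set ys1. \<forall>v\<in>set ys2. v < u"
    using above by (elim subseq_append_separatedE)
  with less have "subseq [x2, x1, x3] a \<or> subseq [x2, x1, x3] (x # b)"
    by (auto simp: Cons_eq_append_conv)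
  then have "subseq [x2, x1, x3] a \<or> subseq [x2, x1, x3] b"
    using into_tail[of x2 "[x1, x3]" x1] less by (meson list.set_intros(1))
  then show ?thesis
    using less unfolding contains_213_def by blast
qed

lemma contains_1342_append_minD:
  assumes "contains_1342 (a @ x # b)"
  shows "contains_231 a \<or> contains_231 b"
proof -
  obtain x1 x2 x3 x4 where less: "x1 < x2" "x2 < x3" "x3 < x4"
    and "subseq [x1, x3, x4, x2] (a @ x # b)"
    using assms unfolding contains_1342_def by blast
  then obtain ys1 ys2 where "[x1, x3, x4, x2] = ys1 @ ys2" "subseq ys1 a" "subseq ys2 (x # b)"
    and "\<forall>u\<in>set ys1. \<forall>v\<in>set ys2. v < u"
    using above by (elim subseq_append_separatedE)
  with less have "subseq [x1, x3, x4, x2] a \<or> subseq [x1, x3, x4, x2] (x # b)"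
    by (auto simp: Cons_eq_append_conv)
  then have "subseq [x3, x4, x2] a \<or> subseq [x3, x4, x2] (x # b)"
    by (blast dest: subseq_Cons')
  moreover have "subseq [x3, x4, x2] b" if "subseq [x3, x4, x2] (x # b)"
    by (rule into_tail[where z = x2]) (use less that in simp_all)
  ultimately show ?thesis
    using less unfolding contains_231_def by blast
qed

lemma contains_3421_append_minD:
  assumes "contains_3421 (a @ x # b)"
  shows "contains_231 a \<or> contains_231 b \<or> \<not> sorted_wrt (>) a \<and> \<not> sorted_wrt (<) b"
proof -
  obtain x1 x2 x3 x4 where less: "x1 < x2" "x2 < x3" "x3 < x4"
    and "subseq [x3, x4, x2, x1] (a @ x # b)"
    using assms unfolding contains_3421_def by blast
  then obtain ys1 ys2 where "[x3, x4, x2, x1] = ys1 @ ys2" "subseq ys1 a" "subseq ys2 (x # b)"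
    and "\<forall>u\<in>set ys1. \<forall>v\<in>set ys2. v < u"
    using above by (elim subseq_append_separatedE)
  with less consider "subseq ([x3, x4, x2] @ [x1]) a" | "subseq [x3, x4, x2] a"
    | "subseq [x3, x4] a" "subseq [x2, x1] (x # b)" | "subseq ([x3, x4, x2] @ [x1]) (x # b)"
    by (auto simp: Cons_eq_append_conv)
  then have "subseq [x3, x4, x2] a \<or> subseq [x3, x4, x2] b \<or> subseq [x3, x4] a \<and> subseq [x2, x1] b"
  proof cases
    case 1
    then show ?thesis
      by (blast dest: subseq_appendD1)
  next
    case 3
    have "subseq [x2, x1] b"
      by (rule into_tail[where z = x1]) (use less 3 in simp_all)
    with 3 show ?thesis
      by blast
  next
    case 4
    then have "subseq [x3, x4, x2] (x # b)"
      by (rule subseq_appendD1)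
    have "subseq [x3, x4, x2] b"
      by (rule into_tail[where z = x2]) (use less \<open>subseq [x3, x4, x2] (x # b)\<close> in simp_all)
    then show ?thesis
      by blast
  qed blast
  moreover have "\<not> sorted_wrt (>) a \<and> \<not> sorted_wrt (<) b" if "subseq [x3, x4] a \<and> subseq [x2, x1] b"
    using that less sorted_wrt_subseq by fastforce
  ultimately show ?thesis
    using less unfolding contains_231_def by blast
qed

end

lemma avoids_213_1342_3421_split_minI:
  assumes "\<forall>u\<in>set a. \<forall>v\<in>set b. v < u" "\<forall>u\<in>set a. x < u" "\<forall>v\<in>set b. x < v"
    and "avoids_213_231 a" "avoids_213_231 b" "sorted_wrt (>) a \<or> sorted_wrt (<) b"
  shows "avoids_213_1342_3421 (a @ x # b)"
proof -
  have above: "\<forall>u\<in>set a. \<forall>v\<in>set (x # b). v < u"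
    using assms(1,2) by auto
  note D = contains_213_append_minD[OF above assms(3)] contains_1342_append_minD[OF above assms(3)]
    contains_3421_append_minD[OF above assms(3)]
  show ?thesis
    using D assms(4-6) unfolding avoids_213_1342_3421_def avoids_213_231_def by blast
qed

lemma contains_3421_append_minI:
  assumes "contains_231 a" and "\<forall>u\<in>set a. x < u"
  shows "contains_3421 (a @ x # b)"
proof -
  obtain x1 x2 x3 where less: "x1 < x2" "x2 < x3" and occ: "subseq [x2, x3, x1] a"
    using assms(1) unfolding contains_231_def by blast
  then have "subseq ([x2, x3, x1] @ [x]) (a @ x # b)"
    by (intro list_emb_append_mono) simp_all
  moreover have "x < x1"
    using assms(2) occ set_subseq by fastforce
  ultimately show ?thesis
    unfolding contains_3421_def using less by fastforce
qed

lemma contains_1342_append_minI: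
  assumes "contains_231 b" and "\<forall>v\<in>set b. x < v"
  shows "contains_1342 (a @ x # b)"
proof -
  obtain x1 x2 x3 where less: "x1 < x2" "x2 < x3" and occ: "subseq [x2, x3, x1] b"
    using assms(1) unfolding contains_231_def by blast
  then have "subseq [x, x2, x3, x1] (a @ x # b)"
    by (simp add: subseq_drop_many)
  moreover have "x < x1"
    using assms(2) occ set_subseq by fastforce
  ultimately show ?thesis
    unfolding contains_1342_def using less by blast
qed

lemma avoids_213_1342_3421_split_minD:
  assumes av: "avoids_213_1342_3421 (a @ x # b)" and dist: "distinct (a @ x # b)"
    and xa: "\<forall>u\<in>set a. x < u" and xb: "\<forall>v\<in>set b. x < v"
  shows "\<forall>u\<in>set a. \<forall>v\<in>set b. v < u" and "avoids_213_231 a" and "avoids_213_231 b"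
    and "sorted_wrt (>) a \<or> sorted_wrt (<) b"
proof -
  show sep: "\<forall>u\<in>set a. \<forall>v\<in>set b. v < u"
  proof (intro ballI)
    fix u v
    assume u: "u \<in> set a" and v: "v \<in> set b"
    have "subseq ([u] @ [x, v]) (a @ x # b)"
      using u v by (intro list_emb_append_mono) (simp_all add: subseq_singleton_left)
    then have "\<not> u < v"
      using av xa u unfolding avoids_213_1342_3421_def contains_213_def by auto
    moreover have "u \<noteq> v"
      using u v dist by auto
    ultimately show "v < u"
      by simp
  qed
  show "avoids_213_231 a" "avoids_213_231 b"
    using av contains_3421_append_minI[OF _ xa] contains_1342_append_minI[OF _ xb]
    unfolding avoids_213_1342_3421_def avoids_213_231_def contains_213_def
    by (blast intro: subseq_rev_drop_many subseq_drop_many list_emb_Cons)+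
  show "sorted_wrt (>) a \<or> sorted_wrt (<) b"
  proof (rule ccontr)
    assume "\<not> (sorted_wrt (>) a \<or> sorted_wrt (<) b)"
    then obtain u v w z where uv: "subseq [u, v] a" "\<not> v < u" and wz: "subseq [w, z] b" "\<not> w < z"
      unfolding sorted_wrt_iff_subseq_pairs by blast
    have "distinct [u, v]" "distinct [w, z]"
      using distinct_subseq[OF uv(1)] distinct_subseq[OF wz(1)] dist by simp_all
    with uv(2) wz(2) have "z < w" "w < u" "u < v"
      using sep set_subseq[OF uv(1)] set_subseq[OF wz(1)] by auto
    moreover have "subseq ([u, v] @ [w, z]) (a @ x # b)"
      using uv(1) list_emb_Cons[OF wz(1)] by (rule list_emb_append_mono)
    ultimately have "contains_3421 (a @ x # b)"
      unfolding contains_3421_def by fastforce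
    with av show False
      unfolding avoids_213_1342_3421_def by blast
  qed
qed

definition Av_pairs :: "nat set \<Rightarrow> nat set \<Rightarrow> (nat list \<times> nat list) set" where
  "Av_pairs A B =
     {(a, b) \<in> Av_213_231 A \<times> Av_213_231 B. sorted_wrt (>) a \<or> sorted_wrt (<) b}"

lemma sorted_wrt_less_permutation_iff:
  assumes "s \<in> permutations_of_set A"
  shows "sorted_wrt (<) s \<longleftrightarrow> s = sorted_list_of_set A"
proof -
  have "finite A" "set s = A" "length s = card A"
    using assms by (auto simp: permutations_of_set_def distinct_card)
  then show ?thesis
    using sorted_list_of_set_unique[of A s] by auto
qed

lemma sorted_wrt_greater_permutation_iff:
  assumes "s \<in> permutations_of_set A"
  shows "sorted_wrt (>) s \<longleftrightarrow> s = rev (sorted_list_of_set A)"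
proof -
  have "rev s \<in> permutations_of_set A"
    using assms by (simp add: permutations_of_set_def)
  have "sorted_wrt (>) s \<longleftrightarrow> sorted_wrt (<) (rev s)"
    by (simp add: sorted_wrt_rev)
  also have "\<dots> \<longleftrightarrow> rev s = sorted_list_of_set A"
    using \<open>rev s \<in> permutations_of_set A\<close> by (rule sorted_wrt_less_permutation_iff)
  finally show ?thesis
    by (simp add: rev_swap)
qed

lemma sorted_lists_in_Av_213_231:
  assumes "finite A"
  shows "sorted_list_of_set A \<in> Av_213_231 A" and "rev (sorted_list_of_set A) \<in> Av_213_231 A"
  using assms sorted_avoids_213_231
  by (auto simp: Av_213_231_def permutations_of_set_def sorted_wrt_rev)

lemma card_Av_pairs:
  assumes "finite A" "finite B"
  shows "card (Av_pairs A B) + 1 = card (Av_213_231 A) + card (Av_213_231 B)"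
proof -
  let ?dec = "rev (sorted_list_of_set A)" and ?inc = "sorted_list_of_set B"
  have dec: "?dec \<in> Av_213_231 A" and inc: "?inc \<in> Av_213_231 B"
    using sorted_lists_in_Av_213_231 assms by blast+
  have "sorted_wrt (>) a \<longleftrightarrow> a = ?dec" if "a \<in> Av_213_231 A" for a
    using that sorted_wrt_greater_permutation_iff[of a A] by (simp add: Av_213_231_def)
  moreover have "sorted_wrt (<) b \<longleftrightarrow> b = ?inc" if "b \<in> Av_213_231 B" for b
    using that sorted_wrt_less_permutation_iff[of b B] by (simp add: Av_213_231_def)
  ultimately have "Av_pairs A B = {?dec} \<times> Av_213_231 B \<union> Av_213_231 A \<times> {?inc}"
    using dec inc unfolding Av_pairs_def by blast
  moreover have "{?dec} \<times> Av_213_231 B \<inter> Av_213_231 A \<times> {?inc} = {(?dec, ?inc)}"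
    using dec inc by blast
  ultimately show ?thesis
    using card_Un_Int[of "{?dec} \<times> Av_213_231 B" "Av_213_231 A \<times> {?inc}"]
    by (simp add: card_cartesian_product)
qed

lemma finite_Av_pairs [simp]: "finite (Av_pairs A B)"
  by (rule finite_subset[of _ "Av_213_231 A \<times> Av_213_231 B"]) (auto simp: Av_pairs_def)

lemma lower_block_eq:
  fixes A B :: "nat set"
  assumes AB: "A \<union> B = {lo..hi}" and below: "\<forall>u\<in>A. \<forall>v\<in>B. v < u"
  shows "B = {lo..<lo + card B}"
proof -
  have fin: "finite B" and B: "B \<subseteq> {lo..hi}"
    using AB by (metis finite_Un finite_atLeastAtMost, blast)
  have "card B \<le> Suc hi - lo"
    using card_mono[OF _ B] by simp
  have "{lo..<lo + card B} \<subseteq> B"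
  proof
    fix z
    assume z: "z \<in> {lo..<lo + card B}"
    show "z \<in> B"
    proof (rule ccontr)
      assume "z \<notin> B"
      moreover have "z \<in> {lo..hi}"
        using z \<open>card B \<le> Suc hi - lo\<close> by simp arith
      ultimately have "z \<in> A"
        using AB by blast
      with below B have "B \<subseteq> {lo..<z}"
        by fastforce
      then have "card B \<le> z - lo"
        by (metis card_atLeastLessThan card_mono finite_atLeastLessThan)
      with z show False
        by auto
    qed
  qed
  moreover have "card {lo..<lo + card B} = card B"
    by simp
  ultimately show ?thesis
    using fin by (metis card_subset_eq)
qed

definition Av_213_1342_3421 :: "nat set \<Rightarrow> nat list set" where
  "Av_213_1342_3421 A = {s \<in> permutations_of_set A. avoids_213_1342_3421 s}"

lemma Av_213_1342_3421_splitE: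
  assumes "s \<in> Av_213_1342_3421 {1..m}" and "m \<noteq> 0"
  obtains k a b where "k < m" "s = a @ 1 # b" "(a, b) \<in> Av_pairs {k + 2..m} {2..<k + 2}"
proof -
  have set_s: "set s = {1..m}" and "distinct s" and av: "avoids_213_1342_3421 s"
    using assms(1) by (auto simp: Av_213_1342_3421_def permutations_of_set_def)
  moreover have "1 \<in> set s"
    using set_s assms(2) by simp
  ultimately obtain a b where s: "s = a @ 1 # b"
    by (meson split_list)
  with \<open>distinct s\<close> have dist: "distinct (a @ 1 # b)"
    by simp
  have "\<forall>u\<in>set a. 1 < u" "\<forall>v\<in>set b. 1 < v"
    using set_s dist s by (auto simp: order.strict_iff_order)
  note parts = avoids_213_1342_3421_split_minD[OF av[unfolded s] dist this]
  have "insert 1 (set a \<union> set b) = {1..m}"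
    using set_s s by auto
  with dist have "set a \<union> set b = {1..m} - {1}"
    by auto
  also have "\<dots> = {2..m}"
    by auto
  finally have ab: "set a \<union> set b = {2..m}" .
  define k where "k = card (set b)"
  have set_b: "set b = {2..<k + 2}"
    using lower_block_eq[OF ab parts(1)] by (simp add: k_def add.commute)
  have "set a = {2..m} - set b"
    using ab dist by auto
  with set_b have set_a: "set a = {k + 2..m}"
    by auto
  have "k \<le> card {2..m}"
    unfolding k_def using ab by (intro card_mono) auto
  with assms(2) have "k < m"
    by simp
  moreover have "(a, b) \<in> Av_pairs {k + 2..m} {2..<k + 2}"
    using parts(2-4) dist set_a set_b
    by (auto simp: Av_pairs_def Av_213_231_def permutations_of_set_def)
  ultimately show thesis
    using s that by blast
qed

lemma append_1_Cons_in_Av_213_1342_3421: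
  assumes "k < m" and "(a, b) \<in> Av_pairs {k + 2..m} {2..<k + 2}"
  shows "a @ 1 # b \<in> Av_213_1342_3421 {1..m}"
proof -
  have a: "set a = {k + 2..m}" "distinct a" "avoids_213_231 a"
    and b: "set b = {2..<k + 2}" "distinct b" "avoids_213_231 b"
    and mono: "sorted_wrt (>) a \<or> sorted_wrt (<) b"
    using assms(2) by (auto simp: Av_pairs_def Av_213_231_def permutations_of_set_def)
  have "a @ 1 # b \<in> permutations_of_set {1..m}"
    using a b assms(1) unfolding permutations_of_set_def by auto
  moreover have "avoids_213_1342_3421 (a @ 1 # b)"
    using a b mono by (intro avoids_213_1342_3421_split_minI) auto
  ultimately show ?thesis
    by (simp add: Av_213_1342_3421_def)
qed

lemma Av_213_1342_3421_eq:
  assumes "m \<noteq> 0"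
  shows "Av_213_1342_3421 {1..m} =
    (\<lambda>(a, b). a @ 1 # b) ` (\<Union>k<m. Av_pairs {k + 2..m} {2..<k + 2})"
proof (intro equalityI subsetI)
  fix s
  assume "s \<in> Av_213_1342_3421 {1..m}"
  then obtain k a b where "k < m" "s = a @ 1 # b" "(a, b) \<in> Av_pairs {k + 2..m} {2..<k + 2}"
    using assms by (rule Av_213_1342_3421_splitE)
  then show "s \<in> (\<lambda>(a, b). a @ 1 # b) ` (\<Union>k<m. Av_pairs {k + 2..m} {2..<k + 2})"
    by (intro image_eqI[where x = "(a, b)"]) auto
next
  fix s
  assume "s \<in> (\<lambda>(a, b). a @ 1 # b) ` (\<Union>k<m. Av_pairs {k + 2..m} {2..<k + 2})"
  then obtain k a b where "k < m" "s = a @ 1 # b" "(a, b) \<in> Av_pairs {k + 2..m} {2..<k + 2}"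
    by force
  then show "s \<in> Av_213_1342_3421 {1..m}"
    using append_1_Cons_in_Av_213_1342_3421 by blast
qed

lemma inj_on_append_Cons:
  "inj_on (\<lambda>(a, b). a @ x # b) {(a, b). x \<notin> set a \<and> x \<notin> set b}"
  by (rule inj_onI) (auto simp: append_Cons_eq_iff)

lemma sum_power2_pred: "(\<Sum>k<Suc m. 2 ^ (k - 1) :: nat) = 2 ^ m"
  by (induction m) simp_all

lemma sum_power2_pred_mirror:
  assumes "m \<noteq> 0"
  shows "(\<Sum>k<m. 2 ^ (m - Suc k - 1) + 2 ^ (k - 1) :: nat) = 2 ^ m"
proof -
  have "(\<Sum>k<m. 2 ^ (m - Suc k - 1) + 2 ^ (k - 1) :: nat) =
      (\<Sum>k<m. 2 ^ (k - 1)) + (\<Sum>k<m. 2 ^ (k - 1))"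
    using sum.nat_diff_reindex[of "\<lambda>j. 2 ^ (j - 1) :: nat" m] by (simp add: sum.distrib)
  also have "\<dots> = 2 ^ (m - 1) + 2 ^ (m - 1)"
    using sum_power2_pred[of "m - 1"] assms by simp
  also have "\<dots> = 2 ^ m"
    using assms by (cases m) simp_all
  finally show ?thesis .
qed

lemma card_Av_213_1342_3421: "card (Av_213_1342_3421 {1..m}) + m = 2 ^ m"
proof (cases "m = 0")
  case True
  then have "Av_213_1342_3421 {1..m} = {[]}"
    by (auto simp: Av_213_1342_3421_def avoids_213_1342_3421_def
        contains_213_def contains_1342_def contains_3421_def)
  with True show ?thesis
    by simp
next
  case False
  let ?P = "\<lambda>k. Av_pairs {k + 2..m} {2..<k + 2}"
  have sets: "set a = {k + 2..m}" "set b = {2..<k + 2}" if "(a, b) \<in> ?P k" for a b k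
    using that by (auto simp: Av_pairs_def Av_213_231_def permutations_of_set_def)
  then have "(\<Union>k<m. ?P k) \<subseteq> {(a, b). 1 \<notin> set a \<and> 1 \<notin> set b}"
    by fastforce
  then have "inj_on (\<lambda>(a, b). a @ 1 # b) (\<Union>k<m. ?P k)"
    by (rule inj_on_subset[OF inj_on_append_Cons])
  then have "card (Av_213_1342_3421 {1..m}) = card (\<Union>k<m. ?P k)"
    unfolding Av_213_1342_3421_eq[OF False] by (rule card_image)
  also have "\<dots> = (\<Sum>k<m. card (?P k))"
  proof (rule card_UN_disjoint)
    show "\<forall>i\<in>{..<m}. \<forall>j\<in>{..<m}. i \<noteq> j \<longrightarrow> ?P i \<inter> ?P j = {}"
      using sets by (metis (no_types, lifting) card_atLeastLessThan diff_add_inverse2 disjoint_iff prod.exhaust)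
  qed simp_all
  finally have "card (Av_213_1342_3421 {1..m}) + m = (\<Sum>k<m. card (?P k)) + (\<Sum>k<m. 1)"
    by simp
  also have "\<dots> = (\<Sum>k<m. card (?P k) + 1)"
    by (rule sum.distrib[symmetric])
  also have "\<dots> = (\<Sum>k<m. 2 ^ (m - Suc k - 1) + 2 ^ (k - 1))"
  proof (rule sum.cong)
    fix k
    have "card (?P k) + 1 = card (Av_213_231 {k + 2..m}) + card (Av_213_231 {2..<k + 2})"
      by (rule card_Av_pairs) simp_all
    then show "card (?P k) + 1 = 2 ^ (m - Suc k - 1) + 2 ^ (k - 1)"
      by (simp add: card_Av_213_231)
  qed simp
  also have "\<dots> = 2 ^ m"
    using False by (rule sum_power2_pred_mirror)
  finally show ?thesis .
qed

lemma circ_perms_eq: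
  assumes "n \<noteq> 0"
  shows "circ_perms n = (\<lambda>s. s @ [n]) ` permutations_of_set {1..<n}"
proof (intro equalityI subsetI)
  fix p
  assume "p \<in> circ_perms n"
  then have p: "set p = {1..n}" "distinct p" "last p = n"
    by (auto simp: circ_perms_def permutations_of_set_def)
  with assms have "p \<noteq> []"
    by auto
  with p(3) obtain s where p_eq: "p = s @ [n]"
    by (metis append_butlast_last_id)
  with p(1,2) have "insert n (set s) = {1..n}" "n \<notin> set s" "distinct s"
    by auto
  then have "set s = {1..n} - {n}"
    by (metis Diff_insert_absorb)
  also have "\<dots> = {1..<n}"
    by auto
  finally have "s \<in> permutations_of_set {1..<n}"
    using \<open>distinct s\<close> by (simp add: permutations_of_set_def)
  with p_eq show "p \<in> (\<lambda>s. s @ [n]) ` permutations_of_set {1..<n}"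
    by (rule image_eqI)
next
  fix p
  assume "p \<in> (\<lambda>s. s @ [n]) ` permutations_of_set {1..<n}"
  then obtain s where "p = s @ [n]" "set s = {1..<n}" "distinct s"
    by (auto simp: permutations_of_set_def)
  then show "p \<in> circ_perms n"
    using assms by (auto simp: circ_perms_def permutations_of_set_def)
qed

lemma circ_perms_avoiding_1342_eq:
  assumes "n \<noteq> 0"
  shows "{p \<in> circ_perms n. circ_avoids p [1, 3, 4, 2]} =
    (\<lambda>s. s @ [n]) ` Av_213_1342_3421 {1..n - 1}"
proof -
  have "{p \<in> circ_perms n. circ_avoids p [1, 3, 4, 2]} =
      (\<lambda>s. s @ [n]) ` {s \<in> permutations_of_set {1..<n}. circ_avoids (s @ [n]) [1, 3, 4, 2]}"
    using assms by (auto simp: circ_perms_eq)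
  also have "{s \<in> permutations_of_set {1..<n}. circ_avoids (s @ [n]) [1, 3, 4, 2]} =
      Av_213_1342_3421 {1..<n}"
    unfolding Av_213_1342_3421_def
  proof (intro Collect_cong conj_cong refl)
    fix s
    assume "s \<in> permutations_of_set {1..<n}"
    then show "circ_avoids (s @ [n]) [1, 3, 4, 2] \<longleftrightarrow> avoids_213_1342_3421 s"
      by (intro circ_avoids_1342_snoc_iff) (simp add: permutations_of_set_def)
  qed
  also have "{1..<n} = {1..n - 1}"
    by auto
  finally show ?thesis .
qed

theorem theorem2:
  fixes n :: nat
  assumes "n \<ge> 1"
  shows "int (card {p \<in> circ_perms n. circ_avoids p [1,3,4,2]}) = 2 ^ (n - 1) - (int n - 1)"
proof -
  have n: "n \<noteq> 0"
    using assms by simp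
  have "card {p \<in> circ_perms n. circ_avoids p [1,3,4,2]} = card (Av_213_1342_3421 {1..n - 1})"
    unfolding circ_perms_avoiding_1342_eq[OF n] by (rule card_image) (simp add: inj_on_def)
  moreover have "card (Av_213_1342_3421 {1..n - 1}) + (n - 1) = 2 ^ (n - 1)"
    by (rule card_Av_213_1342_3421)
  ultimately have "int (card {p \<in> circ_perms n. circ_avoids p [1,3,4,2]}) + int (n - 1) = 2 ^ (n - 1)"
    by (metis of_nat_add of_nat_numeral of_nat_power)
  then show ?thesis
    using assms by (simp add: of_nat_diff)
qed

end
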